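(* Let $m\ge 1$, $k\ge 2$ and $n\ge k-1$. The polynomials $$(x_1\cdots x_n)^m(x_1^{l_1}\cdots x_n^{l_n})^{m+1}(x_1^d+\cdots+x_n^d),$$ where $(d,l_1,\ldots,l_n)$ ranges over all tuples of nonnegative integers with $d+(m+1)(l_1+\cdots+l_n)=(m+1)(k-1)-1$, are linearly independent over $\mathbb{R}$. Hence they form a basis of $W_{m,k}$.
   Context: $W_{m,k}$ denotes the real span of exactly these polynomials. *)

theory Defs
  imports Complex_Main
begin

text \<open>Polynomials in n real variables are represented as polynomial functions
  on points x :: nat => real, using the variables x 0, ..., x (n-1)
  (corresponding to x_1, ..., x_n). Since R is infinite, linear independence
  of polynomial functions coincides with that of the polynomials.\<close>

definition idx :: "nat \<Rightarrow> nat \<Rightarrow> nat \<Rightarrow> (nat \<times> (nat \<Rightarrow> nat)) set" where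
  "idx m k n = {(d, l). (\<forall>i\<ge>n. l i = 0) \<and>
      d + (m + 1) * (\<Sum>i<n. l i) = (m + 1) * (k - 1) - 1}"

definition Wpoly :: "nat \<Rightarrow> nat \<Rightarrow> nat \<times> (nat \<Rightarrow> nat) \<Rightarrow> (nat \<Rightarrow> real) \<Rightarrow> real" where
  "Wpoly m n t x = (\<Prod>i<n. x i) ^ m * (\<Prod>i<n. x i ^ snd t i) ^ (m + 1)
                   * (\<Sum>i<n. x i ^ fst t)"

definition lin_indep_family :: "('i \<Rightarrow> 'a \<Rightarrow> real) \<Rightarrow> 'i set \<Rightarrow> bool" where
  "lin_indep_family f I = (\<forall>S c. finite S \<longrightarrow> S \<subseteq> I \<longrightarrow>
      (\<forall>x. (\<Sum>t\<in>S. c t * f t x) = 0) \<longrightarrow> (\<forall>t\<in>S. c t = 0))"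

end

theory Submission
  imports Defs
begin

text \<open>
  Expanding x_1^d + ... + x_n^d, the polynomial indexed by (d, l) is the sum over i of the
  monomials with exponent m + (m+1) l_j at j \<noteq> i and m + (m+1) l_i + d at i. Since
  d \<equiv> m (mod m+1) and m \<ge> 1, such an exponent vector determines i. As
  (m+1)(l_1 + ... + l_n) < (m+1)(k-1) \<le> (m+1)n, some l_i0 vanishes, and every other
  member of the family containing the monomial of (d, l, i0) has a smaller d. Comparing
  coefficients of this monomial in a vanishing linear combination, induction on d shows
  that all coefficients are zero.
\<close>

lemma polyfun_multi_eq_0_coeffs:
  fixes a :: "'a \<Rightarrow> 'b::{idom,real_normed_div_algebra}" and \<epsilon> :: "'a \<Rightarrow> nat \<Rightarrow> nat"
  assumes "finite A" and "\<And>x. (\<Sum>\<alpha>\<in>A. a \<alpha> * (\<Prod>i<n. x i ^ \<epsilon> \<alpha> i)) = 0"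
  shows "(\<Sum>\<alpha> | \<alpha> \<in> A \<and> (\<forall>i<n. \<epsilon> \<alpha> i = e i). a \<alpha>) = 0"
  using assms
proof (induction n arbitrary: A)
  case 0
  then show ?case by simp
next
  case (Suc n)
  define A\<^sub>k where "A\<^sub>k k = {\<alpha> \<in> A. \<epsilon> \<alpha> n = k}" for k
  define N where "N = (\<Sum>\<alpha>\<in>A. \<epsilon> \<alpha> n)"
  have "(\<Sum>\<alpha>\<in>A\<^sub>k k. a \<alpha> * (\<Prod>i<n. x i ^ \<epsilon> \<alpha> i)) = 0" for k x
  proof (cases "k \<le> N")
    case True
    have "(\<Sum>k\<le>N. (\<Sum>\<alpha>\<in>A\<^sub>k k. a \<alpha> * (\<Prod>i<n. x i ^ \<epsilon> \<alpha> i)) * t ^ k) = 0" for t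
    proof -
      have image: "(\<lambda>\<alpha>. \<epsilon> \<alpha> n) ` A \<subseteq> {..N}"
        unfolding N_def using Suc.prems(1) by (auto intro: member_le_sum)
      have "(\<Sum>k\<le>N. (\<Sum>\<alpha>\<in>A\<^sub>k k. a \<alpha> * (\<Prod>i<n. x i ^ \<epsilon> \<alpha> i)) * t ^ k)
          = (\<Sum>k\<le>N. \<Sum>\<alpha>\<in>A\<^sub>k k. a \<alpha> * (\<Prod>i<n. x i ^ \<epsilon> \<alpha> i) * t ^ \<epsilon> \<alpha> n)"
        unfolding sum_distrib_right by (intro sum.cong refl) (simp add: A\<^sub>k_def)
      also have "\<dots> = (\<Sum>\<alpha>\<in>A. a \<alpha> * (\<Prod>i<n. x i ^ \<epsilon> \<alpha> i) * t ^ \<epsilon> \<alpha> n)"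
        unfolding A\<^sub>k_def by (rule sum.group[OF Suc.prems(1) finite_atMost image])
      also have "\<dots> = (\<Sum>\<alpha>\<in>A. a \<alpha> * (\<Prod>i<Suc n. (x(n := t)) i ^ \<epsilon> \<alpha> i))"
        by (intro sum.cong refl) (simp add: lessThan_Suc mult.assoc)
      also have "\<dots> = 0"
        by (rule Suc.prems(2))
      finally show ?thesis .
    qed
    then have "\<forall>k'\<le>N. (\<Sum>\<alpha>\<in>A\<^sub>k k'. a \<alpha> * (\<Prod>i<n. x i ^ \<epsilon> \<alpha> i)) = 0"
      using polyfun_eq_0[where n=N and c="\<lambda>k'. \<Sum>\<alpha>\<in>A\<^sub>k k'. a \<alpha> * (\<Prod>i<n. x i ^ \<epsilon> \<alpha> i)"]
      by blast
    then show ?thesis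
      using True by blast
  next
    case False
    then have "A\<^sub>k k = {}"
      unfolding A\<^sub>k_def N_def using Suc.prems(1) member_le_sum[of _ A "\<lambda>\<alpha>. \<epsilon> \<alpha> n"] by fastforce
    then show ?thesis by simp
  qed
  then have "(\<Sum>\<alpha> | \<alpha> \<in> A\<^sub>k (e n) \<and> (\<forall>i<n. \<epsilon> \<alpha> i = e i). a \<alpha>) = 0"
    using Suc.IH[of "A\<^sub>k (e n)"] Suc.prems(1) by (simp add: A\<^sub>k_def)
  moreover have "{\<alpha>. \<alpha> \<in> A\<^sub>k (e n) \<and> (\<forall>i<n. \<epsilon> \<alpha> i = e i)} = {\<alpha>. \<alpha> \<in> A \<and> (\<forall>i<Suc n. \<epsilon> \<alpha> i = e i)}"
    unfolding A\<^sub>k_def using less_Suc_eq by auto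
  ultimately show ?case by simp
qed

definition Wpoly_exp :: "nat \<Rightarrow> nat \<times> (nat \<Rightarrow> nat) \<Rightarrow> nat \<Rightarrow> nat \<Rightarrow> nat" where
  "Wpoly_exp m t i j = m + (m + 1) * snd t j + (if j = i then fst t else 0)"

lemma Wpoly_eq_sum_monomials:
  "Wpoly m n t x = (\<Sum>i<n. \<Prod>j<n. x j ^ Wpoly_exp m t i j)"
proof -
  have "(\<Prod>j<n. x j ^ Wpoly_exp m t i j)
      = (\<Prod>j<n. x j) ^ m * (\<Prod>j<n. x j ^ snd t j) ^ (m + 1) * x i ^ fst t" if "i < n" for i
  proof -
    have "(\<Prod>j<n. x j ^ Wpoly_exp m t i j)
        = (\<Prod>j<n. x j ^ m * (x j ^ snd t j) ^ (m + 1) * (if j = i then x j ^ fst t else 1))"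
      unfolding Wpoly_exp_def by (intro prod.cong refl) (simp add: power_add power_mult[symmetric] mult_ac)
    also have "\<dots> = (\<Prod>j<n. x j) ^ m * (\<Prod>j<n. x j ^ snd t j) ^ (m + 1) * x i ^ fst t"
      using that by (simp add: prod.distrib prod_power_distrib)
    finally show ?thesis .
  qed
  then show ?thesis
    unfolding Wpoly_def sum_distrib_left by simp
qed

lemma idx_fst_mod:
  assumes "t \<in> idx m k n" and "k \<ge> 2"
  shows "fst t mod (m + 1) = m"
proof -
  obtain j where "k = 2 + j"
    using le_Suc_ex[OF assms(2)] by blast
  then have "(m + 1) * (k - 1) - 1 = m + (m + 1) * j"
    by (simp add: algebra_simps)
  then have "fst t + (m + 1) * (\<Sum>i<n. snd t i) = m + (m + 1) * j"
    using assms(1) by (auto simp: idx_def)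
  then have "fst t mod (m + 1) = m mod (m + 1)"
    by (metis mod_mult_self2)
  then show ?thesis
    by simp
qed

lemma idx_obtain_zero_entry:
  assumes "t \<in> idx m k n" and "k \<ge> 2" and "n \<ge> k - 1"
  obtains i where "i < n" and "snd t i = 0"
proof -
  have "(m + 1) * (\<Sum>i<n. snd t i) < (m + 1) * (k - 1)"
    using assms(1,2) by (auto simp: idx_def)
  then have "(\<Sum>i<n. snd t i) < n"
    using assms(3) mult_less_cancel1 by (metis order_less_le_trans)
  then have "\<not> (\<forall>i<n. 1 \<le> snd t i)"
    using sum_mono[of "{..<n}" "\<lambda>_. 1" "snd t"] by auto
  then show ?thesis
    using that by auto
qed

lemma Wpoly_exp_eq_imp_index_eq:
  assumes "fst t mod (m + 1) \<noteq> 0" and "i < n" and "\<forall>j<n. Wpoly_exp m t i j = Wpoly_exp m t0 i0 j"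
  shows "i = i0"
proof (rule ccontr)
  assume "i \<noteq> i0"
  then have "(m + 1) * snd t i + fst t = (m + 1) * snd t0 i"
    using assms(2,3) by (auto simp: Wpoly_exp_def)
  then have "fst t mod (m + 1) = 0"
    by (metis mod_mult_self1_is_0 mod_mult_self2 add.commute mult.commute)
  with assms(1) show False ..
qed

lemma Wpoly_exp_eq_at_zero_entry:
  assumes "i < n" and "snd t0 i = 0" and "\<forall>j<n. Wpoly_exp m t i j = Wpoly_exp m t0 i j"
  shows "fst t < fst t0 \<or> (fst t = fst t0 \<and> (\<forall>j<n. snd t j = snd t0 j))"
proof -
  have fst_eq: "(m + 1) * snd t i + fst t = fst t0"
    using assms by (auto simp: Wpoly_exp_def)
  have others: "snd t j = snd t0 j" if "j < n" "j \<noteq> i" for j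
  proof -
    have "(m + 1) * snd t j = (m + 1) * snd t0 j"
      using assms(3)[rule_format, OF that(1)] that(2) by (simp add: Wpoly_exp_def)
    then show ?thesis
      by (simp only: mult_cancel_left) simp
  qed
  show ?thesis
  proof (cases "snd t i = 0")
    case True
    then have "\<forall>j<n. snd t j = snd t0 j"
      using others assms(2) by metis
    with True show ?thesis
      using fst_eq by simp
  next
    case False
    then show ?thesis
      using fst_eq by (simp add: add.commute le_add1 order.not_eq_order_implies_strict)
  qed
qed

lemma Wpoly_combination_eq_monomial_sum:
  "(\<Sum>t\<in>S. c t * Wpoly m n t x)
     = (\<Sum>\<alpha>\<in>S \<times> {..<n}. c (fst \<alpha>) * (\<Prod>j<n. x j ^ Wpoly_exp m (fst \<alpha>) (snd \<alpha>) j))"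
  by (simp add: Wpoly_eq_sum_monomials sum_distrib_left sum.cartesian_product split_def)

lemma idx_Wpoly_exp_eq_imp_eq_or_fst_less:
  assumes "m \<ge> 1" and "k \<ge> 2" and "t \<in> idx m k n" and "t0 \<in> idx m k n"
    and "i < n" and "snd t0 i0 = 0" and "\<forall>j<n. Wpoly_exp m t i j = Wpoly_exp m t0 i0 j"
  shows "(t, i) = (t0, i0) \<or> fst t < fst t0"
proof -
  have "fst t mod (m + 1) \<noteq> 0"
    using idx_fst_mod[OF assms(3,2)] assms(1) by simp
  then have "i = i0"
    using Wpoly_exp_eq_imp_index_eq assms(5,7) by blast
  then have "fst t < fst t0 \<or> (fst t = fst t0 \<and> (\<forall>j<n. snd t j = snd t0 j))"
    using Wpoly_exp_eq_at_zero_entry assms(5,6,7) by blast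
  moreover have "snd t j = 0" "snd t0 j = 0" if "j \<ge> n" for j
    using assms(3,4) that by (auto simp: idx_def)
  ultimately have "fst t < fst t0 \<or> t = t0"
    by (metis not_less prod_eq_iff ext)
  then show ?thesis
    using \<open>i = i0\<close> by auto
qed

lemma Wpoly_exp_fibre_sum:
  assumes "m \<ge> 1" and "k \<ge> 2" and "finite S" and "S \<subseteq> idx m k n" and "t \<in> S"
    and "i0 < n" and "snd t i0 = 0" and "\<And>t'. t' \<in> S \<Longrightarrow> fst t' < fst t \<Longrightarrow> c t' = 0"
  shows "(\<Sum>\<alpha> | \<alpha> \<in> S \<times> {..<n} \<and> (\<forall>j<n. Wpoly_exp m (fst \<alpha>) (snd \<alpha>) j = Wpoly_exp m t i0 j).
            c (fst \<alpha>)) = c t"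
    (is "sum _ ?G = _")
proof -
  have "\<forall>\<alpha>\<in>?G - {(t, i0)}. c (fst \<alpha>) = 0"
  proof
    fix \<alpha>
    assume \<alpha>_mem: "\<alpha> \<in> ?G - {(t, i0)}"
    obtain t' i where \<alpha>: "\<alpha> = (t', i)"
      by fastforce
    have "t' \<in> S" "i < n" and eq: "\<forall>j<n. Wpoly_exp m t' i j = Wpoly_exp m t i0 j"
      using \<alpha>_mem by (simp_all add: \<alpha>)
    then have "(t', i) = (t, i0) \<or> fst t' < fst t"
      using idx_Wpoly_exp_eq_imp_eq_or_fst_less[OF assms(1,2) _ _ \<open>i < n\<close> assms(7) eq] assms(4,5)
      by blast
    then have "fst t' < fst t"
      using \<alpha> \<alpha>_mem by auto
    then show "c (fst \<alpha>) = 0"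
      using assms(8) \<open>t' \<in> S\<close> \<alpha> by simp
  qed
  moreover have "(t, i0) \<in> ?G"
    using assms(5,6) by simp
  moreover have "finite ?G"
    using assms(3) by simp
  ultimately show ?thesis
    using sum.remove[of ?G "(t, i0)" "\<lambda>\<alpha>. c (fst \<alpha>)"] sum.neutral[of "?G - {(t, i0)}"] by simp
qed

theorem lemma4p3:
  fixes m k n :: nat
  assumes "m \<ge> 1" and "k \<ge> 2" and "n \<ge> k - 1"
  shows "lin_indep_family (Wpoly m n) (idx m k n)"
  unfolding lin_indep_family_def
proof (intro allI impI ballI)
  fix S c t
  assume "finite S" and S: "S \<subseteq> idx m k n" and "\<forall>x. (\<Sum>t\<in>S. c t * Wpoly m n t x) = 0" and "t \<in> S"
  then have monomials: "(\<Sum>\<alpha>\<in>S \<times> {..<n}. c (fst \<alpha>) * (\<Prod>j<n. x j ^ Wpoly_exp m (fst \<alpha>) (snd \<alpha>) j)) = 0" for x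
    by (simp add: Wpoly_combination_eq_monomial_sum)
  show "c t = 0"
    using \<open>t \<in> S\<close>
  proof (induction "fst t" arbitrary: t rule: less_induct)
    case less
    obtain i0 where "i0 < n" "snd t i0 = 0"
      using idx_obtain_zero_entry less.prems S assms(2,3) by blast
    then have "(\<Sum>\<alpha> | \<alpha> \<in> S \<times> {..<n} \<and> (\<forall>j<n. Wpoly_exp m (fst \<alpha>) (snd \<alpha>) j = Wpoly_exp m t i0 j).
        c (fst \<alpha>)) = c t"
      using Wpoly_exp_fibre_sum[OF assms(1,2) \<open>finite S\<close> S less.prems] less.hyps by blast
    moreover have "(\<Sum>\<alpha> | \<alpha> \<in> S \<times> {..<n} \<and> (\<forall>j<n. Wpoly_exp m (fst \<alpha>) (snd \<alpha>) j = Wpoly_exp m t i0 j).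
        c (fst \<alpha>)) = 0"
      using polyfun_multi_eq_0_coeffs[OF _ monomials] \<open>finite S\<close> by blast
    ultimately show "c t = 0"
      by simp
  qed
qed

end
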